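(* Let $\phi$ be a formula of Full Modal Team Logic $\mathcal{FMTL}$, let $(M,X)$ be a team model over a set $Prop$ of letters containing the letters of $\phi$, and let $p$ be a letter. If $(M,X)\models\tilde\exists p\,\phi$, then there is a team model $(K,Z)$ with $(K,Z)\rightleftharpoons_{Prop\setminus\{p\}}(M,X)$ and $(K,Z)\models\phi$.
   Context: Kripke models $M=(W,R,V)$, $V:W\to\mathcal P(Prop)$; team models $(M,X)$, $X\subseteq W$. Formulas of $\mathcal{FMTL}$: $p,\neg p,\bot,NE,\phi_1\wedge\phi_2,\phi_1\otimes\phi_2,\phi_1\vee\phi_2,\Diamond\phi,\Box\phi$. Team semantics: $(M,X)\models p$ iff $p\in V(s)$ for all $s\in X$; $\neg p$ iff $p\notin V(s)$ for all $s\in X$; $\bot$ iff $X=\emptyset$; $NE$ iff $X\neq\emptyset$; $\wedge$ componentwise; $\vee$: $(M,X)$ satisfies one of the disjuncts; $\otimes$: $X=X_1\cup X_2$ with $(M,X_i)\models\phi_i$; $(M,X)\models\Diamond\phi$ iff $(M,Y)\models\phi$ for some $Y$ such that every $x\in X$ has an $R$-successor in $Y$ and every $y\in Y$ is an $R$-successor of some $x\in X$; $(M,X)\models\Box\phi$ iff $(M,R[X])\models\phi$, $R[X]$ the set of successors of elements of $X$. For a set $\mathcal P$ of letters, $(M,w)\rightleftharpoons_{\mathcal P}(N,v)$: some relation containing $(w,v)$ has all pairs agreeing on letters of $\mathcal P$ and satisfying forth and back conditions; $(M,X)\rightleftharpoons_{\mathcal P}(N,Y)$: each $x\in X$ is $\mathcal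 P$-bisimilar to some $y\in Y$ and each $y\in Y$ to some $x\in X$. $(M,X)\models\tilde\exists p\,\phi$ iff there is $(M',X')$ with $(M',X')\rightleftharpoons_{\mathcal L(\phi)\setminus\{p\}}(M,X)$ and $(M',X')\models\phi$, where $\mathcal L(\phi)$ is the set of letters of $\phi$. *)

theory Defs
  imports Main
begin

text \<open>Kripke models: the set of worlds is the whole type 'w;
  R is the accessibility relation, V the valuation (set of true letters).\<close>
record ('w, 'p) kmodel =
  Rel :: "('w \<times> 'w) set"
  Val :: "'w \<Rightarrow> 'p set"

definition model_over :: "'p set \<Rightarrow> ('w, 'p) kmodel \<Rightarrow> bool" where
  "model_over Prop M \<longleftrightarrow> (\<forall>w. Val M w \<subseteq> Prop)"

datatype 'p fmtl =
    Atom 'p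
  | NegAtom 'p
  | Bot
  | NE
  | Conj "'p fmtl" "'p fmtl"
  | Tensor "'p fmtl" "'p fmtl"
  | Disj "'p fmtl" "'p fmtl"
  | Dia "'p fmtl"
  | Box "'p fmtl"

primrec letters :: "'p fmtl \<Rightarrow> 'p set" where
  "letters (Atom p) = {p}"
| "letters (NegAtom p) = {p}"
| "letters Bot = {}"
| "letters NE = {}"
| "letters (Conj a b) = letters a \<union> letters b"
| "letters (Tensor a b) = letters a \<union> letters b"
| "letters (Disj a b) = letters a \<union> letters b"
| "letters (Dia a) = letters a"
| "letters (Box a) = letters a"

primrec sat :: "('w, 'p) kmodel \<Rightarrow> 'w set \<Rightarrow> 'p fmtl \<Rightarrow> bool" where
  "sat M X (Atom p) = (\<forall>s\<in>X. p \<in> Val M s)"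
| "sat M X (NegAtom p) = (\<forall>s\<in>X. p \<notin> Val M s)"
| "sat M X Bot = (X = {})"
| "sat M X NE = (X \<noteq> {})"
| "sat M X (Conj a b) = (sat M X a \<and> sat M X b)"
| "sat M X (Tensor a b) = (\<exists>X1 X2. X = X1 \<union> X2 \<and> sat M X1 a \<and> sat M X2 b)"
| "sat M X (Disj a b) = (sat M X a \<or> sat M X b)"
| "sat M X (Dia a) = (\<exists>Y. (\<forall>x\<in>X. \<exists>y\<in>Y. (x, y) \<in> Rel M)
                         \<and> (\<forall>y\<in>Y. \<exists>x\<in>X. (x, y) \<in> Rel M) \<and> sat M Y a)"
| "sat M X (Box a) = sat M (Rel M `` X) a"

definition bisim_pt :: "'p set \<Rightarrow> ('w, 'p) kmodel \<Rightarrow> 'w \<Rightarrow> ('v, 'p) kmodel \<Rightarrow> 'v \<Rightarrow> bool" where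
  "bisim_pt P M w N v \<longleftrightarrow> (\<exists>Z :: ('w \<times> 'v) set. (w, v) \<in> Z \<and>
     (\<forall>(a, b) \<in> Z.
        Val M a \<inter> P = Val N b \<inter> P
      \<and> (\<forall>a'. (a, a') \<in> Rel M \<longrightarrow> (\<exists>b'. (b, b') \<in> Rel N \<and> (a', b') \<in> Z))
      \<and> (\<forall>b'. (b, b') \<in> Rel N \<longrightarrow> (\<exists>a'. (a, a') \<in> Rel M \<and> (a', b') \<in> Z))))"

definition bisim_team :: "'p set \<Rightarrow> ('w, 'p) kmodel \<Rightarrow> 'w set \<Rightarrow> ('v, 'p) kmodel \<Rightarrow> 'v set \<Rightarrow> bool" where
  "bisim_team P M X N Y \<longleftrightarrow>
     (\<forall>x\<in>X. \<exists>y\<in>Y. bisim_pt P M x N y) \<and> (\<forall>y\<in>Y. \<exists>x\<in>X. bisim_pt P M x N y)"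

text \<open>Bisimulation quantifier, with the witnessing model ranging over models whose
  world type is 'b (given by the first argument).\<close>
definition sat_bex :: "'b itself \<Rightarrow> ('w, 'p) kmodel \<Rightarrow> 'w set \<Rightarrow> 'p \<Rightarrow> 'p fmtl \<Rightarrow> bool" where
  "sat_bex _ M X p \<phi> \<longleftrightarrow> (\<exists>(M' :: ('b, 'p) kmodel) X'.
     bisim_team (letters \<phi> - {p}) M' X' M X \<and> sat M' X' \<phi>)"

end

theory Submission
  imports Defs
begin

(* Let (M', X') witness the bisimulation quantifier, with Q = letters phi - {p}. On the pairs (a, b)
   with b Q-bisimilar to a, take the product of the two accessibility relations and let a pair
   carry the letters of phi from b and all other letters from a. The first projection is then a
   bisimulation up to p with M, while the second is a bounded morphism into M' for the letters of
   phi, and team semantics of FMTL is invariant under taking images along bounded morphisms. *)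

definition successor_team :: "('w \<times> 'w) set \<Rightarrow> 'w set \<Rightarrow> 'w set \<Rightarrow> bool" where
  "successor_team R X Y \<longleftrightarrow> (\<forall>x\<in>X. \<exists>y\<in>Y. (x, y) \<in> R) \<and> (\<forall>y\<in>Y. \<exists>x\<in>X. (x, y) \<in> R)"

lemma sat_Dia_iff: "sat M X (Dia a) \<longleftrightarrow> (\<exists>Y. successor_team (Rel M) X Y \<and> sat M Y a)"
  by (simp add: successor_team_def)

definition bounded_morphism_on ::
    "'p set \<Rightarrow> 'w set \<Rightarrow> ('w, 'p) kmodel \<Rightarrow> ('v, 'p) kmodel \<Rightarrow> ('w \<Rightarrow> 'v) \<Rightarrow> bool" where
  "bounded_morphism_on L D K N f \<longleftrightarrow>
     (\<forall>w\<in>D. Val K w \<inter> L = Val N (f w) \<inter> L)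
   \<and> (\<forall>w w'. w \<in> D \<longrightarrow> (w, w') \<in> Rel K \<longrightarrow> w' \<in> D \<and> (f w, f w') \<in> Rel N)
   \<and> (\<forall>w v'. w \<in> D \<longrightarrow> (f w, v') \<in> Rel N \<longrightarrow> (\<exists>w'. (w, w') \<in> Rel K \<and> f w' = v'))"

context
  fixes L D and K :: "('w, 'p) kmodel" and N :: "('v, 'p) kmodel" and f
  assumes morph: "bounded_morphism_on L D K N f"
begin

lemma bounded_morphism_on_Val: "w \<in> D \<Longrightarrow> Val K w \<inter> L = Val N (f w) \<inter> L"
  using morph by (simp add: bounded_morphism_on_def)

lemma bounded_morphism_on_forth: "w \<in> D \<Longrightarrow> (w, w') \<in> Rel K \<Longrightarrow> w' \<in> D \<and> (f w, f w') \<in> Rel N"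
  using morph by (simp add: bounded_morphism_on_def)

lemma bounded_morphism_on_back: "w \<in> D \<Longrightarrow> (f w, v') \<in> Rel N \<Longrightarrow> \<exists>w'. (w, w') \<in> Rel K \<and> f w' = v'"
  using morph by (simp add: bounded_morphism_on_def)

lemma bounded_morphism_on_Image:
  assumes "Z \<subseteq> D"
  shows "Rel K `` Z \<subseteq> D" and "f ` (Rel K `` Z) = Rel N `` (f ` Z)"
proof -
  show "Rel K `` Z \<subseteq> D" using assms bounded_morphism_on_forth by blast
  show "f ` (Rel K `` Z) = Rel N `` (f ` Z)"
  proof
    show "f ` (Rel K `` Z) \<subseteq> Rel N `` (f ` Z)" using assms bounded_morphism_on_forth by blast
    show "Rel N `` (f ` Z) \<subseteq> f ` (Rel K `` Z)"
      using assms bounded_morphism_on_back by (fastforce simp: Image_iff)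
  qed
qed

lemma successor_team_image:
  assumes "Z \<subseteq> D" and "successor_team (Rel K) Z Y"
  shows "Y \<subseteq> D" and "successor_team (Rel N) (f ` Z) (f ` Y)"
proof -
  show "Y \<subseteq> D" using assms bounded_morphism_on_forth by (fastforce simp: successor_team_def)
  show "successor_team (Rel N) (f ` Z) (f ` Y)"
    using assms bounded_morphism_on_forth unfolding successor_team_def by (fastforce simp: subsetD)
qed

lemma successor_team_preimage:
  assumes "Z \<subseteq> D" and "successor_team (Rel N) (f ` Z) Y'"
  obtains Y where "Y \<subseteq> D" "f ` Y = Y'" "successor_team (Rel K) Z Y"
proof
  define Y where "Y = {w' \<in> Rel K `` Z. f w' \<in> Y'}"
  show "Y \<subseteq> D" using assms(1) bounded_morphism_on_Image(1) by (auto simp: Y_def)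
  show "f ` Y = Y'"
  proof
    show "Y' \<subseteq> f ` Y"
    proof
      fix y assume "y \<in> Y'"
      then obtain w where "w \<in> Z" "(f w, y) \<in> Rel N" using assms(2) by (auto simp: successor_team_def)
      then obtain w' where "(w, w') \<in> Rel K" "f w' = y" using assms(1) bounded_morphism_on_back by blast
      then show "y \<in> f ` Y" using \<open>w \<in> Z\<close> \<open>y \<in> Y'\<close> by (auto simp: Y_def)
    qed
  qed (auto simp: Y_def)
  show "successor_team (Rel K) Z Y"
    unfolding successor_team_def
  proof (intro conjI ballI)
    fix w assume "w \<in> Z"
    then obtain y where "y \<in> Y'" "(f w, y) \<in> Rel N" using assms(2) by (auto simp: successor_team_def)
    then obtain w' where "(w, w') \<in> Rel K" "f w' = y" using assms(1) \<open>w \<in> Z\<close> bounded_morphism_on_back by blast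
    then show "\<exists>y\<in>Y. (w, y) \<in> Rel K" using \<open>w \<in> Z\<close> \<open>y \<in> Y'\<close> by (auto simp: Y_def)
  qed (auto simp: Y_def)
qed

lemma sat_bounded_morphism_image:
  "letters \<phi> \<subseteq> L \<Longrightarrow> Z \<subseteq> D \<Longrightarrow> sat K Z \<phi> \<longleftrightarrow> sat N (f ` Z) \<phi>"
proof (induction \<phi> arbitrary: Z)
  case (Atom q)
  then show ?case using bounded_morphism_on_Val by auto
next
  case (NegAtom q)
  then show ?case using bounded_morphism_on_Val by auto
next
  case (Tensor a b)
  show ?case
  proof
    assume "sat K Z (Tensor a b)"
    then obtain Z1 Z2 where Z: "Z = Z1 \<union> Z2" "sat K Z1 a" "sat K Z2 b" by auto
    moreover have "Z1 \<subseteq> D" "Z2 \<subseteq> D" using Tensor.prems(2) Z(1) by auto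
    ultimately have "sat N (f ` Z1) a" "sat N (f ` Z2) b" using Tensor by auto
    moreover have "f ` Z = f ` Z1 \<union> f ` Z2" using Z(1) by (simp only: image_Un)
    ultimately show "sat N (f ` Z) (Tensor a b)" by (simp only: sat.simps) blast
  next
    assume "sat N (f ` Z) (Tensor a b)"
    then obtain Y1 Y2 where Y: "f ` Z = Y1 \<union> Y2" "sat N Y1 a" "sat N Y2 b" by auto
    define Z1 where "Z1 = Z \<inter> f -` Y1"
    define Z2 where "Z2 = Z \<inter> f -` Y2"
    have "Y1 \<subseteq> f ` Z" "Y2 \<subseteq> f ` Z" using Y(1) by auto
    then have "f ` Z1 = Y1" "f ` Z2 = Y2" unfolding Z1_def Z2_def by blast+
    moreover have "Z1 \<subseteq> D" "Z2 \<subseteq> D" using Tensor.prems(2) unfolding Z1_def Z2_def by auto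
    ultimately have "sat K Z1 a" "sat K Z2 b" using Tensor Y by simp_all
    moreover have "Z = Z1 \<union> Z2" using Y(1) unfolding Z1_def Z2_def by blast
    ultimately show "sat K Z (Tensor a b)" by (simp only: sat.simps) blast
  qed
next
  case (Dia a)
  show ?case
  proof
    assume "sat K Z (Dia a)"
    then obtain Y where Y: "successor_team (Rel K) Z Y" "sat K Y a" unfolding sat_Dia_iff by blast
    have "Y \<subseteq> D" "successor_team (Rel N) (f ` Z) (f ` Y)"
      using successor_team_image[OF Dia.prems(2) Y(1)] by simp_all
    with Dia Y(2) show "sat N (f ` Z) (Dia a)" unfolding sat_Dia_iff by auto
  next
    assume "sat N (f ` Z) (Dia a)"
    then obtain Y' where Y': "successor_team (Rel N) (f ` Z) Y'" "sat N Y' a"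
      unfolding sat_Dia_iff by blast
    obtain Y where "Y \<subseteq> D" "f ` Y = Y'" "successor_team (Rel K) Z Y"
      using successor_team_preimage[OF Dia.prems(2) Y'(1)] .
    with Dia Y'(2) show "sat K Z (Dia a)" unfolding sat_Dia_iff by auto
  qed
next
  case (Box a)
  then show ?case using bounded_morphism_on_Image by simp
qed simp_all

end

lemma bisim_ptI:
  assumes "(w, v) \<in> B"
    and "\<And>a b. (a, b) \<in> B \<Longrightarrow> Val M a \<inter> P = Val N b \<inter> P"
    and "\<And>a b a'. (a, b) \<in> B \<Longrightarrow> (a, a') \<in> Rel M \<Longrightarrow> \<exists>b'. (b, b') \<in> Rel N \<and> (a', b') \<in> B"
    and "\<And>a b b'. (a, b) \<in> B \<Longrightarrow> (b, b') \<in> Rel N \<Longrightarrow> \<exists>a'. (a, a') \<in> Rel M \<and> (a', b') \<in> B"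
  shows "bisim_pt P M w N v"
  unfolding bisim_pt_def by (intro exI[of _ B] conjI) (use assms in auto)

lemma bisim_ptE:
  assumes "bisim_pt P M w N v"
  obtains B where "(w, v) \<in> B"
    and "\<And>a b. (a, b) \<in> B \<Longrightarrow> Val M a \<inter> P = Val N b \<inter> P"
    and "\<And>a b a'. (a, b) \<in> B \<Longrightarrow> (a, a') \<in> Rel M \<Longrightarrow> \<exists>b'. (b, b') \<in> Rel N \<and> (a', b') \<in> B"
    and "\<And>a b b'. (a, b) \<in> B \<Longrightarrow> (b, b') \<in> Rel N \<Longrightarrow> \<exists>a'. (a, a') \<in> Rel M \<and> (a', b') \<in> B"
proof -
  from assms obtain B where "(w, v) \<in> B" and B: "\<forall>(a, b) \<in> B.
        Val M a \<inter> P = Val N b \<inter> P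
      \<and> (\<forall>a'. (a, a') \<in> Rel M \<longrightarrow> (\<exists>b'. (b, b') \<in> Rel N \<and> (a', b') \<in> B))
      \<and> (\<forall>b'. (b, b') \<in> Rel N \<longrightarrow> (\<exists>a'. (a, a') \<in> Rel M \<and> (a', b') \<in> B))"
    unfolding bisim_pt_def by blast
  show thesis
  proof (rule that[OF \<open>(w, v) \<in> B\<close>])
    fix a b assume "(a, b) \<in> B"
    with B show "Val M a \<inter> P = Val N b \<inter> P" by auto
    from \<open>(a, b) \<in> B\<close> B show "\<exists>b'. (b, b') \<in> Rel N \<and> (a', b') \<in> B" if "(a, a') \<in> Rel M" for a'
      using that by auto
    from \<open>(a, b) \<in> B\<close> B show "\<exists>a'. (a, a') \<in> Rel M \<and> (a', b') \<in> B" if "(b, b') \<in> Rel N" for b'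
      using that by auto
  qed
qed

lemma bisim_pt_Val: "bisim_pt P M w N v \<Longrightarrow> Val M w \<inter> P = Val N v \<inter> P"
  by (elim bisim_ptE) blast

lemma bisim_pt_forth:
  assumes "bisim_pt P M w N v" and "(w, w') \<in> Rel M"
  obtains v' where "(v, v') \<in> Rel N" and "bisim_pt P M w' N v'"
proof -
  obtain B where B: "(w, v) \<in> B"
    "\<And>a b. (a, b) \<in> B \<Longrightarrow> Val M a \<inter> P = Val N b \<inter> P"
    "\<And>a b a'. (a, b) \<in> B \<Longrightarrow> (a, a') \<in> Rel M \<Longrightarrow> \<exists>b'. (b, b') \<in> Rel N \<and> (a', b') \<in> B"
    "\<And>a b b'. (a, b) \<in> B \<Longrightarrow> (b, b') \<in> Rel N \<Longrightarrow> \<exists>a'. (a, a') \<in> Rel M \<and> (a', b') \<in> B"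
    using assms(1) by (rule bisim_ptE) blast
  with assms(2) obtain v' where "(v, v') \<in> Rel N" and "(w', v') \<in> B" by blast
  from \<open>(w', v') \<in> B\<close> have "bisim_pt P M w' N v'" by (rule bisim_ptI[OF _ B(2-4)])
  with \<open>(v, v') \<in> Rel N\<close> show thesis by (rule that)
qed

lemma bisim_pt_back:
  assumes "bisim_pt P M w N v" and "(v, v') \<in> Rel N"
  obtains w' where "(w, w') \<in> Rel M" and "bisim_pt P M w' N v'"
proof -
  obtain B where B: "(w, v) \<in> B"
    "\<And>a b. (a, b) \<in> B \<Longrightarrow> Val M a \<inter> P = Val N b \<inter> P"
    "\<And>a b a'. (a, b) \<in> B \<Longrightarrow> (a, a') \<in> Rel M \<Longrightarrow> \<exists>b'. (b, b') \<in> Rel N \<and> (a', b') \<in> B"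
    "\<And>a b b'. (a, b) \<in> B \<Longrightarrow> (b, b') \<in> Rel N \<Longrightarrow> \<exists>a'. (a, a') \<in> Rel M \<and> (a', b') \<in> B"
    using assms(1) by (rule bisim_ptE) blast
  with assms(2) obtain w' where "(w, w') \<in> Rel M" and "(w', v') \<in> B" by blast
  from \<open>(w', v') \<in> B\<close> have "bisim_pt P M w' N v'" by (rule bisim_ptI[OF _ B(2-4)])
  with \<open>(w, w') \<in> Rel M\<close> show thesis by (rule that)
qed

lemma bisim_pt_mono:
  assumes "bisim_pt P M w N v" and "P' \<subseteq> P"
  shows "bisim_pt P' M w N v"
proof (rule bisim_ptI[where B = "{(a, b). bisim_pt P M a N b}"])
  show "Val M a \<inter> P' = Val N b \<inter> P'" if "(a, b) \<in> {(a, b). bisim_pt P M a N b}" for a b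
    using that bisim_pt_Val[of P M a N b] assms(2) by blast
qed (use assms(1) in \<open>auto elim: bisim_pt_forth bisim_pt_back\<close>)

lemma bisim_team_mono: "bisim_team P M X N Y \<Longrightarrow> P' \<subseteq> P \<Longrightarrow> bisim_team P' M X N Y"
  unfolding bisim_team_def by (meson bisim_pt_mono)

definition bisim_pairs :: "'p set \<Rightarrow> ('a, 'p) kmodel \<Rightarrow> ('b, 'p) kmodel \<Rightarrow> ('a \<times> 'b) set" where
  "bisim_pairs Q M M' = {(a, b). bisim_pt Q M' b M a}"

definition amalgam ::
    "'p set \<Rightarrow> 'p set \<Rightarrow> ('a, 'p) kmodel \<Rightarrow> ('b, 'p) kmodel \<Rightarrow> ('a \<times> 'b, 'p) kmodel" where
  "amalgam L Q M M' =
     \<lparr>Rel = {((a, b), (a', b')). (a, b) \<in> bisim_pairs Q M M' \<and> (a', b') \<in> bisim_pairs Q M M'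
                 \<and> (a, a') \<in> Rel M \<and> (b, b') \<in> Rel M'},
      Val = (\<lambda>(a, b). (Val M a - L) \<union> (Val M' b \<inter> L))\<rparr>"

lemma model_over_amalgam:
  "model_over Prop M \<Longrightarrow> L \<subseteq> Prop \<Longrightarrow> model_over Prop (amalgam L Q M M')"
  unfolding model_over_def amalgam_def by auto

lemma bounded_morphism_on_snd_amalgam:
  "bounded_morphism_on L (bisim_pairs Q M M') (amalgam L Q M M') M' snd"
  unfolding bounded_morphism_on_def
proof (intro conjI allI ballI impI)
  fix u v' assume "u \<in> bisim_pairs Q M M'" and "(snd u, v') \<in> Rel M'"
  moreover obtain a b where "u = (a, b)" by fastforce
  ultimately obtain a' where "(a, a') \<in> Rel M" "bisim_pt Q M' v' M a'"
    by (auto simp: bisim_pairs_def elim: bisim_pt_forth)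
  with \<open>u \<in> bisim_pairs Q M M'\<close> \<open>(snd u, v') \<in> Rel M'\<close> \<open>u = (a, b)\<close>
  show "\<exists>u'. (u, u') \<in> Rel (amalgam L Q M M') \<and> snd u' = v'"
    by (intro exI[of _ "(a', v')"]) (auto simp: amalgam_def bisim_pairs_def)
qed (auto simp: amalgam_def)

lemma bisim_pt_fst_amalgam:
  assumes "Q \<subseteq> L" and "(a, b) \<in> bisim_pairs Q M M'"
  shows "bisim_pt (- (L - Q)) (amalgam L Q M M') (a, b) M a"
proof (rule bisim_ptI[where B = "{((a, b), a) | a b. (a, b) \<in> bisim_pairs Q M M'}"])
  show "((a, b), a) \<in> {((a, b), a) | a b. (a, b) \<in> bisim_pairs Q M M'}" using assms(2) by blast
next
  fix u a0 assume "(u, a0) \<in> {((a, b), a) | a b. (a, b) \<in> bisim_pairs Q M M'}"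
  then obtain b0 where u: "u = (a0, b0)" and ab: "(a0, b0) \<in> bisim_pairs Q M M'" by blast
  from ab have "Val M' b0 \<inter> Q = Val M a0 \<inter> Q" by (auto simp: bisim_pairs_def dest: bisim_pt_Val)
  with assms(1) u show "Val (amalgam L Q M M') u \<inter> - (L - Q) = Val M a0 \<inter> - (L - Q)"
    by (auto simp: amalgam_def)
  show "\<exists>a'. (a0, a') \<in> Rel M \<and> (u', a') \<in> {((a, b), a) | a b. (a, b) \<in> bisim_pairs Q M M'}"
    if "(u, u') \<in> Rel (amalgam L Q M M')" for u'
  proof -
    obtain a1 b1 where u': "u' = (a1, b1)" by fastforce
    with that u have "(a0, a1) \<in> Rel M" "(a1, b1) \<in> bisim_pairs Q M M'"
      by (simp_all add: amalgam_def)
    with u' show ?thesis by blast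
  qed
  show "\<exists>u'. (u, u') \<in> Rel (amalgam L Q M M') \<and> (u', a') \<in> {((a, b), a) | a b. (a, b) \<in> bisim_pairs Q M M'}"
    if "(a0, a') \<in> Rel M" for a'
  proof -
    from ab that obtain b' where "(b0, b') \<in> Rel M'" "bisim_pt Q M' b' M a'"
      by (auto simp: bisim_pairs_def elim: bisim_pt_back)
    then have "(a', b') \<in> bisim_pairs Q M M'" by (simp add: bisim_pairs_def)
    with ab that \<open>(b0, b') \<in> Rel M'\<close> have "(u, (a', b')) \<in> Rel (amalgam L Q M M')"
      by (simp add: u amalgam_def)
    moreover have "((a', b'), a') \<in> {((a, b), a) | a b. (a, b) \<in> bisim_pairs Q M M'}"
      using \<open>(a', b') \<in> bisim_pairs Q M M'\<close> by blast
    ultimately show ?thesis by (intro exI conjI)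
  qed
qed

lemma snd_image_bisim_pairs:
  assumes "bisim_team Q M' X' M X"
  shows "snd ` (bisim_pairs Q M M' \<inter> X \<times> X') = X'"
proof
  show "X' \<subseteq> snd ` (bisim_pairs Q M M' \<inter> X \<times> X')"
  proof
    fix b assume "b \<in> X'"
    with assms obtain a where "a \<in> X" "bisim_pt Q M' b M a" unfolding bisim_team_def by blast
    with \<open>b \<in> X'\<close> have "(a, b) \<in> bisim_pairs Q M M' \<inter> X \<times> X'" by (simp add: bisim_pairs_def)
    then show "b \<in> snd ` (bisim_pairs Q M M' \<inter> X \<times> X')" by force
  qed
qed auto

lemma bisim_team_fst_amalgam:
  assumes "Q \<subseteq> L" and "bisim_team Q M' X' M X"
  shows "bisim_team (- (L - Q)) (amalgam L Q M M') (bisim_pairs Q M M' \<inter> X \<times> X') M X"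
  unfolding bisim_team_def
proof (intro conjI ballI)
  fix u assume "u \<in> bisim_pairs Q M M' \<inter> X \<times> X'"
  then obtain a b where u: "u = (a, b)" and "(a, b) \<in> bisim_pairs Q M M'" and "a \<in> X"
    by (cases u) blast
  have "bisim_pt (- (L - Q)) (amalgam L Q M M') u M a"
    unfolding u by (rule bisim_pt_fst_amalgam[OF assms(1)]) fact
  with \<open>a \<in> X\<close> show "\<exists>a\<in>X. bisim_pt (- (L - Q)) (amalgam L Q M M') u M a" by blast
next
  fix a assume "a \<in> X"
  with assms(2) obtain b where "b \<in> X'" "bisim_pt Q M' b M a" unfolding bisim_team_def by blast
  then have "(a, b) \<in> bisim_pairs Q M M'" by (simp add: bisim_pairs_def)
  with \<open>a \<in> X\<close> \<open>b \<in> X'\<close> bisim_pt_fst_amalgam[OF assms(1) this]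
  show "\<exists>u\<in>bisim_pairs Q M M' \<inter> X \<times> X'. bisim_pt (- (L - Q)) (amalgam L Q M M') u M a"
    by blast
qed

theorem mainTheorem7:
  fixes Prop :: "'p set" and \<phi> :: "'p fmtl" and p :: 'p
    and M :: "('a, 'p) kmodel" and X :: "'a set"
  assumes "letters \<phi> \<subseteq> Prop"
    and "model_over Prop M"
    and "sat_bex TYPE('b) M X p \<phi>"
  shows "\<exists>(K :: ('a \<times> 'b, 'p) kmodel) Z. model_over Prop K \<and>
           bisim_team (Prop - {p}) K Z M X \<and> sat K Z \<phi>"
proof -
  define L where "L = letters \<phi>"
  define Q where "Q = L - {p}"
  obtain M' :: "('b, 'p) kmodel" and X' where bisim: "bisim_team Q M' X' M X" and "sat M' X' \<phi>"
    using assms(3) unfolding sat_bex_def Q_def L_def by blast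
  have "Q \<subseteq> L" and "Prop - {p} \<subseteq> - (L - Q)" unfolding Q_def by auto
  define K where "K = amalgam L Q M M'"
  define Z where "Z = bisim_pairs Q M M' \<inter> X \<times> X'"
  have "model_over Prop K"
    using model_over_amalgam[OF assms(2)] assms(1) unfolding K_def L_def by blast
  moreover have "bisim_team (Prop - {p}) K Z M X"
    using bisim_team_mono[OF bisim_team_fst_amalgam[OF \<open>Q \<subseteq> L\<close> bisim] \<open>Prop - {p} \<subseteq> - (L - Q)\<close>]
    unfolding K_def Z_def .
  moreover have "sat K Z \<phi> \<longleftrightarrow> sat M' (snd ` Z) \<phi>"
    using sat_bounded_morphism_image[OF bounded_morphism_on_snd_amalgam]
    unfolding K_def Z_def L_def by blast
  then have "sat K Z \<phi>"
    using snd_image_bisim_pairs[OF bisim] \<open>sat M' X' \<phi>\<close> unfolding Z_def by simp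
  ultimately show ?thesis by blast
qed

end
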